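(* In the algebra $\mathbb C\langle\langle\mathbb C_n\rangle\rangle$ of noncommutative formal power series over the alphabet $\mathbb C_n$, $$\sum_{S\vDash n}\underline{M_S}=\sum_{E\subseteq\{1,\dots,n\}}A_{n-\#E}(0,1,1,\dots)\,\underline{\mathbb T_E},$$ where the left sum runs over all set partitions $S$ of $\{1,\dots,n\}$.
   Context: $\mathbb C_n=\{c_E\mid E\subseteq\{1,\dots,n\}\}$. For a family $S$ of pairwise disjoint nonempty subsets of $\{1,\dots,n\}$ (written $S\subset_{\vDash}E$ if all its members lie in $E$), $M_S=(\{c_\emptyset\}\cup\{c_s\mid s\in S\})^*$. For $E\subseteq\{1,\dots,n\}$, $\mathbb T_E=\bigcup_{S\subset_{\vDash}E}M_S$ (words encoding, column by column, saturated tableaux whose marked rows all lie in $E$). For a language $L$, $\underline{L}=\sum_{w\in L}w$ is its characteristic series. $A_k(0,1,1,\dots)$ is the complete Bell polynomial evaluated at $a_1=0$, $a_i=1$ ($i\ge2$), i.e. the number of set partitions of a $k$-element set with no singleton block ($A_0=1$); its exponential generating function is $\exp(e^t-1-t)$. *)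

theory Defs
  imports Complex_Main "HOL-Library.Disjoint_Sets"
begin

text \<open>Letters of the alphabet C_n: the letter c_E is represented by the set E itself
  (E a subset of {1..n}).  A noncommutative formal power
  series over C_n with complex coefficients is a function from words to complex numbers;
  addition and scalar multiplication are pointwise.\<close>

type_synonym letter = "nat set"
type_synonym ncseries = "letter list \<Rightarrow> complex"

definition char_series :: "letter list set \<Rightarrow> ncseries" where
  "char_series L = (\<lambda>w. if w \<in> L then 1 else 0)"

text \<open>M_S = ({c_empty} union {c_s | s in S})^*.\<close>
definition M_lang :: "nat set set \<Rightarrow> letter list set" where
  "M_lang S = lists ({{}} \<union> S)"

definition disj_family_in :: "nat set set \<Rightarrow> nat set \<Rightarrow> bool" where
  "disj_family_in S E \<longleftrightarrow> disjoint S \<and> {} \<notin> S \<and> (\<forall>s\<in>S. s \<subseteq> E)"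

definition T_lang :: "nat set \<Rightarrow> letter list set" where
  "T_lang E = (\<Union>S\<in>{S. disj_family_in S E}. M_lang S)"

text \<open>Complete Bell polynomial A_m(a_1,a_2,...), where a i stands for a_i (i \<ge> 1):
  A_0 = 1, A_(m+1) = sum_(k=0..m) binom(m,k) a_(k+1) A_(m-k).\<close>
fun complete_bell :: "(nat \<Rightarrow> complex) \<Rightarrow> nat \<Rightarrow> complex" where
  "complete_bell a 0 = 1"
| "complete_bell a (Suc m) =
     (\<Sum>k\<le>m. of_nat (m choose k) * a (Suc k) * complete_bell a (m - k))"

definition zero_one_seq :: "nat \<Rightarrow> complex" where
  "zero_one_seq i = (if i \<le> 1 then 0 else 1)"

end

theory Submission
  imports Defs
begin

text \<open>
  Compare the coefficients of a word \<open>w\<close>, and let \<open>L\<close> be the set of its nonempty letters.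
  On the left, \<open>w\<close> is counted once for each set partition of \<open>{1..n}\<close> having every member
  of \<open>L\<close> as a block; on the right, \<open>w \<in> T\<^sub>E\<close> exactly when \<open>L\<close> is a disjoint family
  inside \<open>E\<close>. Partitions having the members of \<open>L\<close> as blocks are partitions of the
  complement \<open>C\<close> of \<open>\<Union>L\<close>, and a partition of \<open>C\<close> splits uniquely into its singleton
  blocks and a singleton-free partition of the rest \<open>D\<close>. Singleton-free partitions of a
  \<open>k\<close>-set are counted by \<open>A\<^sub>k(0,1,1,\<dots>)\<close> (remove the block of a new point), so both
  coefficients equal the sum of \<open>A\<^bsub>#D\<^esub>\<close> over \<open>D \<subseteq> C\<close>, with \<open>E\<close> the complement of \<open>D\<close>.
\<close>

lemma partition_on_Un:
  assumes "partition_on (A - B) P" "partition_on B L" "B \<subseteq> A"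
  shows "partition_on A (P \<union> L)"
  using assms unfolding partition_on_def
  by (auto intro!: disjoint_union)

lemma partition_on_Diff:
  assumes "partition_on A S" "L \<subseteq> S"
  shows "partition_on (A - \<Union>L) (S - L)"
proof (rule partition_onI)
  have "x \<notin> \<Union>L" if "b \<in> S - L" "x \<in> b" for b x
    using assms that disjointD[OF partition_onD2[OF assms(1)]] by blast
  then show "\<Union>(S - L) = A - \<Union>L"
    using partition_onD1[OF assms(1)] by blast
  show "disjnt p q" if "p \<in> S - L" "q \<in> S - L" "p \<noteq> q" for p q
    using that partition_onD2[OF assms(1)] by (auto simp: pairwise_def)
  show "{} \<notin> S - L"
    using partition_onD3[OF assms(1)] by blast
qed

lemma partition_on_Diff_Union_Int_empty:
  assumes "partition_on (A - \<Union>L) P"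
  shows "P \<inter> L = {}"
proof (rule equals0I)
  fix b assume "b \<in> P \<inter> L"
  with partition_onD1[OF assms] have "b = {}" by blast
  with \<open>b \<in> P \<inter> L\<close> partition_onD3[OF assms] show False by blast
qed

lemma partition_on_unique_block:
  assumes "partition_on A P" "x \<in> A"
  obtains b where "b \<in> P" "x \<in> b" "{c \<in> P. x \<in> c} = {b}"
proof -
  obtain b where b: "b \<in> P" "x \<in> b" using partition_onD1[OF assms(1)] assms(2) by blast
  moreover have "c = b" if "c \<in> P" "x \<in> c" for c
    using disjointD[OF partition_onD2[OF assms(1)]] b that by blast
  ultimately show thesis using that by blast
qed

lemma bij_betw_partitions_containing:
  assumes "partition_on B L" "B \<subseteq> A"
  shows "bij_betw (\<lambda>P. P \<union> L) {P. partition_on (A - B) P} {S. partition_on A S \<and> L \<subseteq> S}"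
proof (rule bij_betw_byWitness[where f' = "\<lambda>S. S - L"])
  have B: "B = \<Union>L" using partition_onD1[OF assms(1)] .
  show "\<forall>P\<in>{P. partition_on (A - B) P}. P \<union> L - L = P"
    using partition_on_Diff_Union_Int_empty unfolding B by blast
  show "\<forall>S\<in>{S. partition_on A S \<and> L \<subseteq> S}. S - L \<union> L = S" by blast
  show "(\<lambda>P. P \<union> L) ` {P. partition_on (A - B) P} \<subseteq> {S. partition_on A S \<and> L \<subseteq> S}"
    using partition_on_Un[OF _ assms] by blast
  show "(\<lambda>S. S - L) ` {S. partition_on A S \<and> L \<subseteq> S} \<subseteq> {P. partition_on (A - B) P}"
    using partition_on_Diff unfolding B by blast
qed

definition singleton_free_partitions :: "'a set \<Rightarrow> 'a set set set" where
  "singleton_free_partitions A = {P. partition_on A P \<and> (\<forall>b\<in>P. 2 \<le> card b)}"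

lemma finite_singleton_free_partitions: "finite A \<Longrightarrow> finite (singleton_free_partitions A)"
  by (rule finite_subset[OF _ finitely_many_partition_on]) (auto simp: singleton_free_partitions_def)

lemma small_blocks_eq_singletons:
  assumes "partition_on A P" "finite A"
  shows "{b \<in> P. card b < 2} = (\<lambda>x. {x}) ` {x. {x} \<in> P}"
proof -
  have "card b < 2 \<longleftrightarrow> (\<exists>x. b = {x})" if "b \<in> P" for b
  proof -
    have "finite b" "b \<noteq> {}"
      using that assms(2) partition_onD1[OF assms(1)] partition_onD3[OF assms(1)]
      by (auto intro: finite_subset)
    then show ?thesis
      by (metis card_1_singleton_iff card_0_eq less_2_cases_iff)
  qed
  then show ?thesis by auto
qed

lemma bij_betw_add_singleton_blocks:
  assumes "finite A"
  shows "bij_betw (\<lambda>(D, Q). Q \<union> (\<lambda>x. {x}) ` (A - D))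
           (SIGMA D:Pow A. singleton_free_partitions D) {P. partition_on A P}"
    (is "bij_betw ?join _ _")
proof -
  define split where "split P = (A - {x. {x} \<in> P}, {b \<in> P. \<not> card b < 2})" for P
  show ?thesis
  proof (rule bij_betw_byWitness[where f' = split])
    show "\<forall>s\<in>SIGMA D:Pow A. singleton_free_partitions D. split (?join s) = s"
      by (force simp: split_def singleton_free_partitions_def)
    show "\<forall>P\<in>{P. partition_on A P}. ?join (split P) = P"
    proof
      fix P assume P: "P \<in> {P. partition_on A P}"
      have "{x. {x} \<in> P} \<subseteq> A" using partition_onD1[of A P] P by blast
      then show "?join (split P) = P"
        using small_blocks_eq_singletons[of A P] P assms by (auto simp: split_def double_diff)
    qed
    show "?join ` (SIGMA D:Pow A. singleton_free_partitions D) \<subseteq> {P. partition_on A P}"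
    proof clarify
      fix D Q assume "D \<subseteq> A" "Q \<in> singleton_free_partitions D"
      then have "partition_on (A - (A - D)) Q"
        by (simp add: double_diff singleton_free_partitions_def)
      then show "partition_on A (Q \<union> (\<lambda>x. {x}) ` (A - D))"
        using partition_on_Un[OF _ partition_on_singletons] by blast
    qed
    show "split ` {P. partition_on A P} \<subseteq> (SIGMA D:Pow A. singleton_free_partitions D)"
    proof (rule image_subsetI)
      fix P assume "P \<in> {P. partition_on A P}"
      then have P: "partition_on A P" by simp
      have "partition_on (A - \<Union>{b \<in> P. card b < 2}) (P - {b \<in> P. card b < 2})"
        by (rule partition_on_Diff[OF P]) blast
      moreover have "\<Union>{b \<in> P. card b < 2} = {x. {x} \<in> P}"
        unfolding small_blocks_eq_singletons[OF P assms] by blast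
      moreover have "P - {b \<in> P. card b < 2} = {b \<in> P. \<not> card b < 2}" by blast
      ultimately show "split P \<in> (SIGMA D:Pow A. singleton_free_partitions D)"
        by (auto simp: split_def singleton_free_partitions_def)
    qed
  qed
qed

lemma card_partitions_eq_sum_singleton_free:
  assumes "finite A"
  shows "card {P. partition_on A P} = (\<Sum>D\<in>Pow A. card (singleton_free_partitions D))"
proof -
  have "card {P. partition_on A P} = card (SIGMA D:Pow A. singleton_free_partitions D)"
    using bij_betw_same_card[OF bij_betw_add_singleton_blocks[OF assms]] by simp
  also have "\<dots> = (\<Sum>D\<in>Pow A. card (singleton_free_partitions D))"
    using assms by (intro card_SigmaI) (auto intro: finite_singleton_free_partitions finite_subset)
  finally show ?thesis .
qed

lemma insert_block_in_singleton_free_partitions: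
  assumes "finite Y" "x \<notin> Y" "K \<subseteq> Y" "K \<noteq> {}" "Q \<in> singleton_free_partitions (Y - K)"
  shows "insert (insert x K) Q \<in> singleton_free_partitions (insert x Y)"
proof -
  have "\<Union>Q = Y - K" "x \<notin> K" "finite K"
    using assms partition_onD1[of "Y - K" Q] finite_subset[of K Y]
    by (auto simp: singleton_free_partitions_def)
  then have "disjnt (insert x K) (\<Union>Q)" and "2 \<le> card (insert x K)"
    using assms(2,4) by (auto simp: disjnt_def Suc_le_eq card_gt_0_iff)
  moreover have "insert x Y - insert x K = Y - K"
    using assms(2) by blast
  ultimately show ?thesis
    using assms(3,5) by (auto simp: singleton_free_partitions_def partition_on_insert)
qed

lemma remove_block_in_singleton_free_partitions:
  assumes "x \<notin> Y" "P \<in> singleton_free_partitions (insert x Y)" "b \<in> P" "x \<in> b"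
  shows "b - {x} \<subseteq> Y" "b - {x} \<noteq> {}" "P - {b} \<in> singleton_free_partitions (Y - (b - {x}))"
proof -
  have part: "partition_on (insert x Y) P" and big: "\<forall>c\<in>P. 2 \<le> card c"
    using assms(2) by (auto simp: singleton_free_partitions_def)
  show "b - {x} \<subseteq> Y"
    using assms(3) partition_onD1[OF part] by blast
  have "b \<noteq> {x}" using assms(3) big by force
  then show "b - {x} \<noteq> {}" using assms(4) by blast
  have "partition_on (insert x Y - \<Union>{b}) (P - {b})"
    using assms(3) by (intro partition_on_Diff[OF part]) auto
  moreover have "insert x Y - \<Union>{b} = Y - (b - {x})"
    using assms partition_onD1[OF part] by blast
  ultimately show "P - {b} \<in> singleton_free_partitions (Y - (b - {x}))"
    using big by (auto simp: singleton_free_partitions_def)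
qed

lemma bij_betw_insert_block:
  assumes "finite Y" "x \<notin> Y"
  shows "bij_betw (\<lambda>(K, Q). insert (insert x K) Q)
           (SIGMA K:{K. K \<subseteq> Y \<and> K \<noteq> {}}. singleton_free_partitions (Y - K))
           (singleton_free_partitions (insert x Y))"
    (is "bij_betw ?join ?Sigma _")
proof -
  define split where "split P = (\<Union>{b \<in> P. x \<in> b} - {x}, {b \<in> P. x \<notin> b})" for P
  have block_of_x: "\<exists>b. b \<in> P \<and> x \<in> b \<and> {c \<in> P. x \<in> c} = {b}"
    if "P \<in> singleton_free_partitions (insert x Y)" for P
    using that by (auto simp: singleton_free_partitions_def elim: partition_on_unique_block)
  show ?thesis
  proof (rule bij_betw_byWitness[where f' = split])
    show "\<forall>s\<in>?Sigma. split (?join s) = s"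
    proof clarify
      fix K Q assume K: "K \<subseteq> Y" and Q: "Q \<in> singleton_free_partitions (Y - K)"
      have "\<Union>Q = Y - K" "x \<notin> K"
        using K Q assms(2) partition_onD1[of "Y - K" Q]
        by (auto simp: singleton_free_partitions_def)
      then show "split (insert (insert x K) Q) = (K, Q)"
        using assms(2) by (auto simp: split_def)
    qed
    show "\<forall>P\<in>singleton_free_partitions (insert x Y). ?join (split P) = P"
    proof
      fix P assume "P \<in> singleton_free_partitions (insert x Y)"
      then obtain b where "b \<in> P" "x \<in> b" "{c \<in> P. x \<in> c} = {b}"
        using block_of_x by blast
      then show "?join (split P) = P"
        by (auto simp: split_def)
    qed
    show "?join ` ?Sigma \<subseteq> singleton_free_partitions (insert x Y)"
      using insert_block_in_singleton_free_partitions[OF assms] by auto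
    show "split ` singleton_free_partitions (insert x Y) \<subseteq> ?Sigma"
    proof (rule image_subsetI)
      fix P assume P: "P \<in> singleton_free_partitions (insert x Y)"
      then obtain b where b: "b \<in> P" "x \<in> b" "{c \<in> P. x \<in> c} = {b}"
        using block_of_x by blast
      then have "split P = (b - {x}, P - {b})"
        by (auto simp: split_def)
      then show "split P \<in> ?Sigma"
        using remove_block_in_singleton_free_partitions[OF assms(2) P b(1,2)] by simp
    qed
  qed
qed

lemma card_singleton_free_partitions_insert:
  assumes "finite Y" "x \<notin> Y"
  shows "card (singleton_free_partitions (insert x Y))
       = (\<Sum>K | K \<subseteq> Y \<and> K \<noteq> {}. card (singleton_free_partitions (Y - K)))"
proof -
  have "card (singleton_free_partitions (insert x Y))
      = card (SIGMA K:{K. K \<subseteq> Y \<and> K \<noteq> {}}. singleton_free_partitions (Y - K))"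
    using bij_betw_same_card[OF bij_betw_insert_block[OF assms]] by simp
  also have "\<dots> = (\<Sum>K | K \<subseteq> Y \<and> K \<noteq> {}. card (singleton_free_partitions (Y - K)))"
    using assms(1) by (intro card_SigmaI) (auto intro: finite_singleton_free_partitions)
  finally show ?thesis .
qed

lemma sum_Pow_card:
  fixes h :: "nat \<Rightarrow> 'b::comm_semiring_1"
  assumes "finite Y"
  shows "(\<Sum>K\<in>Pow Y. h (card K)) = (\<Sum>k\<le>card Y. of_nat (card Y choose k) * h k)"
proof -
  have "(\<Sum>K\<in>Pow Y. h (card K)) = (\<Sum>k\<le>card Y. \<Sum>K\<in>{K \<in> Pow Y. card K = k}. h (card K))"
    by (rule sum.group[symmetric]) (use assms card_mono in auto)
  also have "\<dots> = (\<Sum>k\<le>card Y. of_nat (card Y choose k) * h k)"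
  proof (rule sum.cong[OF refl])
    fix k
    have "(\<Sum>K\<in>{K \<in> Pow Y. card K = k}. h (card K)) = (\<Sum>K | K \<subseteq> Y \<and> card K = k. h k)"
      by (rule sum.cong) auto
    then show "(\<Sum>K\<in>{K \<in> Pow Y. card K = k}. h (card K)) = of_nat (card Y choose k) * h k"
      using n_subsets[OF assms, of k] by simp
  qed
  finally show ?thesis .
qed

lemma complete_bell_zero_one_seq_Suc:
  assumes "finite Y"
  shows "complete_bell zero_one_seq (Suc (card Y))
       = (\<Sum>K | K \<subseteq> Y \<and> K \<noteq> {}. complete_bell zero_one_seq (card (Y - K)))"
proof -
  let ?A = "complete_bell zero_one_seq"
  have "(\<Sum>K | K \<subseteq> Y \<and> K \<noteq> {}. ?A (card (Y - K)))
      = (\<Sum>K\<in>Pow Y. if card K = 0 then 0 else ?A (card Y - card K))"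
    using assms
    by (intro sum.mono_neutral_cong_left) (auto simp: card_Diff_subset finite_subset card_eq_0_iff)
  also have "\<dots> = (\<Sum>k\<le>card Y. of_nat (card Y choose k) * (if k = 0 then 0 else ?A (card Y - k)))"
    by (rule sum_Pow_card[OF assms])
  also have "\<dots> = ?A (Suc (card Y))"
    by (auto intro!: sum.cong simp: zero_one_seq_def)
  finally show ?thesis ..
qed

lemma card_singleton_free_partitions:
  "finite A \<Longrightarrow> of_nat (card (singleton_free_partitions A)) = complete_bell zero_one_seq (card A)"
proof (induction "card A" arbitrary: A rule: less_induct)
  case less
  show ?case
  proof (cases "A = {}")
    case True
    then have "singleton_free_partitions A = {{}}"
      by (auto simp: singleton_free_partitions_def partition_on_empty)
    with True show ?thesis by simp
  next
    case False
    then obtain x Y where A: "A = insert x Y" "x \<notin> Y"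
      by (meson Set.set_insert ex_in_conv)
    have Y: "finite Y" using less.prems A by simp
    have "card (Y - K) < card A" if "K \<subseteq> Y" for K
      using A Y that by (simp add: card_Diff_subset finite_subset le_imp_less_Suc)
    then have "of_nat (card (singleton_free_partitions A))
        = (\<Sum>K | K \<subseteq> Y \<and> K \<noteq> {}. complete_bell zero_one_seq (card (Y - K)))"
      using card_singleton_free_partitions_insert[OF Y A(2)] A Y less.hyps by simp
    also have "\<dots> = complete_bell zero_one_seq (card A)"
      using complete_bell_zero_one_seq_Suc[OF Y] A Y by simp
    finally show ?thesis .
  qed
qed

lemma card_partitions_containing:
  assumes "finite A" "{} \<notin> L"
  shows "of_nat (card {S. partition_on A S \<and> L \<subseteq> S})
       = (\<Sum>E\<in>{E \<in> Pow A. disjoint L \<and> \<Union>L \<subseteq> E}. complete_bell zero_one_seq (card A - card E))"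
proof (cases "disjoint L \<and> \<Union>L \<subseteq> A")
  case True
  define C where "C = A - \<Union>L"
  have "finite C" using assms(1) by (simp add: C_def)
  have "partition_on (\<Union>L) L" using True assms(2) by (simp add: partition_on_def)
  then have "card {S. partition_on A S \<and> L \<subseteq> S} = card {P. partition_on C P}"
    unfolding C_def using True by (simp add: bij_betw_same_card[OF bij_betw_partitions_containing])
  also have "\<dots> = (\<Sum>D\<in>Pow C. card (singleton_free_partitions D))"
    by (rule card_partitions_eq_sum_singleton_free[OF \<open>finite C\<close>])
  finally have "of_nat (card {S. partition_on A S \<and> L \<subseteq> S})
      = (\<Sum>D\<in>Pow C. complete_bell zero_one_seq (card D))"
    using \<open>finite C\<close> by (simp add: card_singleton_free_partitions finite_subset)
  also have "\<dots> = (\<Sum>E\<in>{E \<in> Pow A. disjoint L \<and> \<Union>L \<subseteq> E}. complete_bell zero_one_seq (card A - card E))"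
  proof (rule sum.reindex_bij_witness[of _ "\<lambda>D. A - D" "\<lambda>E. A - E"])
    have "card A - card (A - D) = card D" if "D \<subseteq> A" for D
      using assms(1) that by (simp add: card_Diff_subset finite_subset card_mono)
    then show "complete_bell zero_one_seq (card A - card (A - D)) = complete_bell zero_one_seq (card D)"
      if "D \<in> Pow C" for D
      using that unfolding C_def by (metis Diff_subset PowD subset_trans)
  qed (use True in \<open>auto simp: C_def\<close>)
  finally show ?thesis .
next
  case False
  have "{S. partition_on A S \<and> L \<subseteq> S} = {}"
  proof (intro equals0I)
    fix S assume "S \<in> {S. partition_on A S \<and> L \<subseteq> S}"
    then have S: "partition_on A S \<and> L \<subseteq> S" by simp
    then have "disjoint L" using pairwise_subset partition_onD2 by blast
    moreover have "\<Union>L \<subseteq> A" using S partition_onD1 by blast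
    ultimately show False using False by blast
  qed
  moreover have "{E \<in> Pow A. disjoint L \<and> \<Union>L \<subseteq> E} = {}"
    using False by blast
  ultimately show ?thesis by (simp only: card.empty sum.empty of_nat_0)
qed

lemma mem_M_lang_iff: "w \<in> M_lang S \<longleftrightarrow> set w - {{}} \<subseteq> S"
  by (auto simp: M_lang_def)

lemma mem_T_lang_iff: "w \<in> T_lang E \<longleftrightarrow> disjoint (set w - {{}}) \<and> \<Union>(set w - {{}}) \<subseteq> E"
proof
  assume "w \<in> T_lang E"
  then obtain S where "disj_family_in S E" "set w - {{}} \<subseteq> S"
    by (auto simp: T_lang_def mem_M_lang_iff)
  then show "disjoint (set w - {{}}) \<and> \<Union>(set w - {{}}) \<subseteq> E"
    using pairwise_subset by (fastforce simp: disj_family_in_def)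
next
  assume "disjoint (set w - {{}}) \<and> \<Union>(set w - {{}}) \<subseteq> E"
  then have "disj_family_in (set w - {{}}) E" by (auto simp: disj_family_in_def)
  then show "w \<in> T_lang E" by (auto simp: T_lang_def mem_M_lang_iff)
qed

lemma sum_char_series:
  "finite I \<Longrightarrow> (\<Sum>i\<in>I. c i * char_series (F i) w) = (\<Sum>i\<in>{i \<in> I. w \<in> F i}. c i)"
  by (auto simp: char_series_def sum.inter_filter intro!: sum.cong)

theorem proposition1:
  fixes n :: nat
  shows "(\<lambda>w. \<Sum>S\<in>{S. partition_on {1..n} S}. char_series (M_lang S) w)
       = (\<lambda>w. \<Sum>E\<in>Pow {1..n}.
              complete_bell zero_one_seq (n - card E) * char_series (T_lang E) w)"
proof
  fix w :: "letter list"
  define L where "L = set w - {{}}"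
  have fin: "finite {S. partition_on {1..n} S}"
    by (simp add: finitely_many_partition_on)
  have "(\<Sum>S\<in>{S. partition_on {1..n} S}. char_series (M_lang S) w)
      = of_nat (card {S. partition_on {1..n} S \<and> L \<subseteq> S})"
    using sum_char_series[OF fin, of "\<lambda>_. 1"] by (simp add: mem_M_lang_iff L_def)
  also have "\<dots> = (\<Sum>E\<in>{E \<in> Pow {1..n}. disjoint L \<and> \<Union>L \<subseteq> E}. complete_bell zero_one_seq (n - card E))"
    using card_partitions_containing[of "{1..n}" L] by (simp add: L_def)
  also have "\<dots> = (\<Sum>E\<in>Pow {1..n}. complete_bell zero_one_seq (n - card E) * char_series (T_lang E) w)"
    by (simp add: sum_char_series mem_T_lang_iff L_def)
  finally show "(\<Sum>S\<in>{S. partition_on {1..n} S}. char_series (M_lang S) w)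
      = (\<Sum>E\<in>Pow {1..n}. complete_bell zero_one_seq (n - card E) * char_series (T_lang E) w)" .
qed
end
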